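(* The wall $W$ has a $4$-track layout such that for all distinct edges $pq$ and $pr$, the vertices $q$ and $r$ are in distinct tracks.
   Context: The wall is the infinite graph $W$ with vertex set $\mathbb{Z}^2$ and edge set $\{(x,y)(x+1,y): x,y\in\mathbb{Z}\}\cup\{(x,y)(x,y+1): x,y\in\mathbb{Z},\ x+y\text{ even}\}$. A track in a graph is an independent set equipped with a total order $\preceq$. A $k$-track layout is a partition $(V_1,\dots,V_k)$ of the vertex set into tracks such that there are no edges $vw$ and $xy$ with $v\prec x$ in some track $V_i$ and $y\prec w$ in some track $V_j$. *)

theory Defs
  imports Main
begin

type_synonym vertex = "int \<times> int"

definition wall_edge :: "vertex \<Rightarrow> vertex \<Rightarrow> bool" where
  "wall_edge u v \<longleftrightarrow>
     (fst v = fst u + 1 \<and> snd v = snd u) \<or>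
     (fst v = fst u \<and> snd v = snd u + 1 \<and> even (fst u + snd u))"

definition wall_adj :: "vertex \<Rightarrow> vertex \<Rightarrow> bool" where
  "wall_adj u v \<longleftrightarrow> wall_edge u v \<or> wall_edge v u"

definition track_layout ::
  "('a \<Rightarrow> 'a \<Rightarrow> bool) \<Rightarrow> nat \<Rightarrow> ('a \<Rightarrow> nat) \<Rightarrow> ('a \<Rightarrow> 'a \<Rightarrow> bool) \<Rightarrow> bool" where
  "track_layout E k trk prec \<longleftrightarrow>
     (\<forall>v. trk v < k) \<and>
     (\<forall>v w. E v w \<longrightarrow> trk v \<noteq> trk w) \<and>
     (\<forall>v w. prec v w \<longrightarrow> trk v = trk w) \<and>
     (\<forall>v. \<not> prec v v) \<and>
     (\<forall>u v w. prec u v \<longrightarrow> prec v w \<longrightarrow> prec u w) \<and>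
     (\<forall>v w. trk v = trk w \<longrightarrow> v \<noteq> w \<longrightarrow> prec v w \<or> prec w v) \<and>
     (\<forall>v w x y. E v w \<longrightarrow> E x y \<longrightarrow> \<not> (prec v x \<and> prec y w))"

end

theory Submission
  imports Defs "HOL-Library.Product_Lexorder"
begin

text \<open>Colour the vertex (x,y) by x + 2y mod 4 and order each colour class
  lexicographically. Along an edge the colour changes by 1 (step right), 3 (step left)
  or 2 (the unique vertical step, whose direction is fixed by the parity of x + y), so
  every vertex has at most one neighbour of each colour and that neighbour is a
  function of the vertex and the colour difference. On a colour class this function
  is strictly monotone in the lexicographic order (two vertices in one column with
  the same colour have y-coordinates of equal parity, hence step in the same
  direction), which rules out crossings.\<close>

lemma track_layout_by_linorder:
  fixes trk :: "'a::linorder \<Rightarrow> nat"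
  assumes "\<And>v. trk v < k"
    and "\<And>v w. E v w \<Longrightarrow> trk v \<noteq> trk w"
    and "\<And>v w x y. E v w \<Longrightarrow> E x y \<Longrightarrow> trk v = trk x \<Longrightarrow> trk w = trk y \<Longrightarrow>
           v < x \<Longrightarrow> y < w \<Longrightarrow> False"
  shows "track_layout E k trk (\<lambda>u v. trk u = trk v \<and> u < v)"
  using assms unfolding track_layout_def by (auto simp: neq_iff) (metis assms(3))

definition wall_label :: "vertex \<Rightarrow> int" where
  "wall_label p = (fst p + 2 * snd p) mod 4"

definition wall_step :: "vertex \<Rightarrow> int \<Rightarrow> vertex" where
  "wall_step u d =
     (if d = 1 then (fst u + 1, snd u)
      else if d = 3 then (fst u - 1, snd u)
      else (fst u, if even (fst u + snd u) then snd u + 1 else snd u - 1))"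

lemma wall_adj_eq_step:
  assumes "wall_adj u v"
  shows "wall_label v \<noteq> wall_label u \<and> v = wall_step u ((wall_label v - wall_label u) mod 4)"
proof -
  obtain a b c d where uv: "u = (a, b)" "v = (c, d)" by fastforce
  have "wall_label v \<noteq> wall_label u \<longleftrightarrow> (c + 2 * d - (a + 2 * b)) mod 4 \<noteq> 0"
    unfolding uv wall_label_def by (simp add: mod_eq_dvd_iff dvd_eq_mod_eq_0)
  moreover have "(wall_label v - wall_label u) mod 4 = (c + 2 * d - (a + 2 * b)) mod 4"
    unfolding uv wall_label_def by (simp add: mod_diff_eq)
  moreover from assms consider
      "c = a + 1" "d = b" | "c = a - 1" "d = b"
    | "c = a" "d = b + 1" "even (a + b)" | "c = a" "d = b - 1" "odd (a + b)"
    unfolding uv wall_adj_def wall_edge_def by fastforce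
  then have "(c + 2 * d - (a + 2 * b)) mod 4 \<noteq> 0 \<and>
      (c, d) = wall_step (a, b) ((c + 2 * d - (a + 2 * b)) mod 4)"
    by cases (simp_all add: wall_step_def)
  ultimately show ?thesis
    using uv by simp
qed

lemma wall_step_strict_mono:
  assumes "u < v" and "wall_label u = wall_label v"
  shows "wall_step u d < wall_step v d"
proof -
  obtain a b c e where uv: "u = (a, b)" "v = (c, e)" by fastforce
  have "even (a + b) \<longleftrightarrow> even (c + e)" if "a = c"
  proof -
    from assms(2) have "4 dvd (a + 2 * b) - (c + 2 * e)"
      unfolding uv wall_label_def by (simp add: mod_eq_dvd_iff)
    with that show ?thesis by presburger
  qed
  with assms(1) show ?thesis
    unfolding uv wall_step_def by auto
qed

theorem lemma13:
  shows "\<exists>trk prec. track_layout wall_adj 4 trk prec \<and>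
           (\<forall>p q r. wall_adj p q \<longrightarrow> wall_adj p r \<longrightarrow> q \<noteq> r \<longrightarrow> trk q \<noteq> trk r)"
proof (intro exI conjI)
  let ?trk = "\<lambda>p. nat (wall_label p)"
  have trk_eq: "?trk u = ?trk v \<longleftrightarrow> wall_label u = wall_label v" for u v
    by (simp add: wall_label_def eq_nat_nat_iff)
  show "track_layout wall_adj 4 ?trk (\<lambda>u v. ?trk u = ?trk v \<and> u < v)"
  proof (rule track_layout_by_linorder)
    show "?trk v < 4" for v
      by (simp add: wall_label_def)
    show "?trk v \<noteq> ?trk w" if "wall_adj v w" for v w
      using wall_adj_eq_step[OF that] trk_eq by metis
    show False if "wall_adj v w" "wall_adj x y" "?trk v = ?trk x" "?trk w = ?trk y"
      and "v < x" "y < w" for v w x y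
    proof -
      have labels: "wall_label v = wall_label x" "wall_label w = wall_label y"
        using that(3,4) trk_eq by blast+
      let ?d = "(wall_label w - wall_label v) mod 4"
      have "w = wall_step v ?d" "y = wall_step x ?d"
        using wall_adj_eq_step[OF that(1)] wall_adj_eq_step[OF that(2)] labels by simp_all
      with wall_step_strict_mono[OF \<open>v < x\<close> labels(1)] \<open>y < w\<close> show False
        by (metis less_asym)
    qed
  qed
  show "\<forall>p q r. wall_adj p q \<longrightarrow> wall_adj p r \<longrightarrow> q \<noteq> r \<longrightarrow> ?trk q \<noteq> ?trk r"
    using wall_adj_eq_step trk_eq by metis
qed

end
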